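(* Let $q$ be a prime power and $1\le t_i\le t_o\le s$. If there exists a linear $(t_i,t_o,s,q)$-AONT, then there exists a linear $(t_i',t_o,s,q)$-AONT for every $t_i'$ with $1\le t_i'\le t_i$.
   Context: A linear $(t_i,t_o,s,q)$-AONT is given by an invertible $s\times s$ matrix $M$ over $\mathbb{F}_q$ defining the map $\mathbf{x}\mapsto\mathbf{y}=\mathbf{x}M^{-1}$ on row vectors of $\mathbb{F}_q^s$, such that for every set $I$ of $t_i$ input coordinates and every set $J$ of $s-t_o$ output coordinates, the pair $((x_i)_{i\in I},(y_j)_{j\in J})$ takes every value in $\mathbb{F}_q^{t_i+s-t_o}$ equally often as $\mathbf{x}$ ranges over $\mathbb{F}_q^s$. Equivalently, $M$ is invertible and every $t_o\times t_i$ submatrix of $M$ has rank $t_i$. *)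

theory Defs
  imports "Jordan_Normal_Form.DL_Rank" "Jordan_Normal_Form.DL_Submatrix"
begin

text \<open>A linear (t_i, t_o, s, q)-AONT over the finite field 'a (with q = CARD('a)):
  an invertible s x s matrix M such that every t_o x t_i submatrix
  (rows J = output coordinates, columns I = input coordinates) has rank t_i.\<close>

definition linear_AONT :: "nat \<Rightarrow> nat \<Rightarrow> nat \<Rightarrow> 'a::{finite,field} mat \<Rightarrow> bool" where
  "linear_AONT ti to s M \<longleftrightarrow>
     M \<in> carrier_mat s s \<and> invertible_mat M \<and>
     (\<forall>I J. I \<subseteq> {..<s} \<and> card I = ti \<and> J \<subseteq> {..<s} \<and> card J = to \<longrightarrow>
        vec_space.rank to (submatrix M J I) = ti)"

end

theory Submission
  imports Defs
begin

(* The same matrix M works: every t_o x t_i' submatrix is obtained from a t_o x t_i one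
   (enlarge the column set to size t_i) by deleting columns, and a matrix whose columns are
   linearly independent keeps this property when columns are deleted. *)

lemma obtain_superset_with_card:
  assumes "finite S" "A \<subseteq> S" "card A \<le> n" "n \<le> card S"
  obtains B where "A \<subseteq> B" "B \<subseteq> S" "card B = n"
proof -
  have "finite A" using assms(1,2) finite_subset by blast
  then have "card (S - A) = card S - card A" using assms(2) by (simp add: card_Diff_subset)
  then obtain D where D: "D \<subseteq> S - A" "card D = n - card A"
    using obtain_subset_with_card_n[of "n - card A" "S - A"] assms(4) by force
  have "finite D" using D(1) assms(1) finite_subset by blast
  then have "card (A \<union> D) = n" using D \<open>finite A\<close> assms(3) by (subst card_Un_disjoint) auto
  then show ?thesis using that[of "A \<union> D"] D(1) assms(2) by blast
qed

(* card {a \<in> I. a < i} is the position of i within I. *)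
lemma nths_subset_eq_nths_nths:
  assumes "I' \<subseteq> I"
  shows "nths xs I' = nths (nths xs I) ((\<lambda>i. card {a \<in> I. a < i}) ` I')"
proof -
  let ?rk = "\<lambda>i. card {a \<in> I. a < i}"
  have "?rk i < ?rk j" if "i \<in> I" "i < j" for i j
    using that by (intro psubset_card_mono) auto
  then have "inj_on ?rk I" by (metis (no_types, lifting) inj_onI less_irrefl linorder_neqE_nat)
  then have "{i \<in> I. \<exists>j \<in> ?rk ` I'. ?rk i = j} = I'"
    using assms by (auto dest: inj_onD)
  then show ?thesis by (simp add: nths_nths)
qed

lemma cols_submatrix: "cols (submatrix A R I) = nths (cols (submatrix A R UNIV)) I"
proof (rule nth_equalityI)
  show "length (cols (submatrix A R I)) = length (nths (cols (submatrix A R UNIV)) I)"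
    by (simp add: dim_submatrix length_nths)
  fix k assume "k < length (cols (submatrix A R I))"
  then have k: "k < card {j. j < dim_col A \<and> j \<in> I}" by (simp add: dim_submatrix)
  then have "pick I k < dim_col A" using pick_le by blast
  then show "cols (submatrix A R I) ! k = nths (cols (submatrix A R UNIV)) I ! k"
    using k by (auto simp: nth_nths dim_submatrix submatrix_index pick_UNIV)
qed

lemma (in vec_space) full_rank_distinct_cols:
  assumes A: "A \<in> carrier_mat n k" and r: "rank A = k"
  shows "distinct (cols A)"
proof -
  obtain S where S: "maximal S (\<lambda>T. T \<subseteq> set (cols A) \<and> lin_indpt T)"
    using maximal_exists[of "\<lambda>T. T \<subseteq> set (cols A) \<and> lin_indpt T" "card (set (cols A))" "{}"]
    by (meson List.finite_set card_mono empty_iff empty_subsetI finite_lin_indpt2 rev_finite_subset)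
  then have "card S \<le> card (set (cols A))" by (simp add: card_mono maximal_def)
  moreover have "rank A = card S" using rank_card_indpt[OF A S] .
  ultimately have "length (cols A) \<le> card (set (cols A))" using A r by simp
  then show ?thesis using card_distinct card_length le_antisym by metis
qed

lemma (in vec_space) full_rank_of_cols_subset:
  assumes A: "A \<in> carrier_mat n k" and r: "rank A = k"
    and A': "A' \<in> carrier_mat n k'"
    and sub: "set (cols A') \<subseteq> set (cols A)" and dist: "distinct (cols A')"
  shows "rank A' = k'"
proof -
  have "lin_indpt (set (cols A))"
    using full_rank_lin_indpt[OF A r full_rank_distinct_cols[OF A r]] .
  then have "lin_indpt (set (cols A'))" using subset_li_is_li sub by blast
  then show ?thesis using lin_indpt_full_rank[OF A' dist] by blast
qed

lemma (in vec_space) full_rank_submatrix_cols_subset: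
  assumes R: "R \<subseteq> {..<dim_row A}" "card R = n"
    and I: "I \<subseteq> {..<dim_col A}" and I': "I' \<subseteq> I"
    and r: "rank (submatrix A R I) = card I"
  shows "rank (submatrix A R I') = card I'"
proof -
  have carrier: "submatrix A R X \<in> carrier_mat n (card X)" if "X \<subseteq> {..<dim_col A}" for X
  proof (rule carrier_matI)
    have "{i. i < dim_row A \<and> i \<in> R} = R" "{j. j < dim_col A \<and> j \<in> X} = X"
      using R(1) that by auto
    then show "dim_row (submatrix A R X) = n" "dim_col (submatrix A R X) = card X"
      unfolding dim_submatrix using R(2) by simp_all
  qed
  have cols_eq: "cols (submatrix A R I') = nths (cols (submatrix A R I)) ((\<lambda>i. card {a \<in> I. a < i}) ` I')"
    unfolding cols_submatrix[of A R I'] cols_submatrix[of A R I]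
    using nths_subset_eq_nths_nths[OF I'] .
  have "distinct (cols (submatrix A R I))"
    using full_rank_distinct_cols[OF carrier[OF I] r] .
  then have "distinct (cols (submatrix A R I'))"
    unfolding cols_eq by (rule distinct_nthsI)
  moreover have "set (cols (submatrix A R I')) \<subseteq> set (cols (submatrix A R I))"
    unfolding cols_eq by (rule set_nths_subset)
  moreover have "I' \<subseteq> {..<dim_col A}" using I I' by blast
  ultimately show ?thesis
    using full_rank_of_cols_subset[OF carrier[OF I] r carrier] by blast
qed

lemma linear_AONT_smaller_ti:
  assumes M: "linear_AONT ti to s M" and "ti' \<le> ti" and "ti \<le> s"
  shows "linear_AONT ti' to s M"
proof -
  have Mc: "M \<in> carrier_mat s s" and Mi: "invertible_mat M"
    and rank: "\<And>I J. I \<subseteq> {..<s} \<Longrightarrow> card I = ti \<Longrightarrow> J \<subseteq> {..<s} \<Longrightarrow> card J = to \<Longrightarrow>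
        vec_space.rank to (submatrix M J I) = ti"
    using M unfolding linear_AONT_def by auto
  show ?thesis
    unfolding linear_AONT_def
  proof (intro conjI allI impI Mc Mi)
    fix I' J assume "I' \<subseteq> {..<s} \<and> card I' = ti' \<and> J \<subseteq> {..<s} \<and> card J = to"
    then have I': "I' \<subseteq> {..<s}" "card I' = ti'" and J: "J \<subseteq> {..<s}" "card J = to" by auto
    obtain I where I: "I' \<subseteq> I" "I \<subseteq> {..<s}" "card I = ti"
      using obtain_superset_with_card[of "{..<s}" I' ti] I' assms(2,3) by auto
    then have "vec_space.rank to (submatrix M J I) = card I" using rank[OF I(2,3) J] by simp
    moreover have "J \<subseteq> {..<dim_row M}" "I \<subseteq> {..<dim_col M}" using I J Mc by auto
    ultimately have "vec_space.rank to (submatrix M J I') = card I'"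
      using vec_space.full_rank_submatrix_cols_subset I(1) J(2) by metis
    then show "vec_space.rank to (submatrix M J I') = ti'" using I' by simp
  qed
qed

theorem mainTheorem9:
  fixes M :: "'a::{finite,field} mat"
    and ti ti' to s :: nat
  assumes "1 \<le> ti" and "ti \<le> to" and "to \<le> s"
    and "linear_AONT ti to s M"
    and "1 \<le> ti'" and "ti' \<le> ti"
  shows "\<exists>M' :: 'a mat. linear_AONT ti' to s M'"
  using linear_AONT_smaller_ti[OF assms(4) assms(6)] assms(2,3) by (meson le_trans)

end
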